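(* Let $m\ge3$, $d\ge1$, $n\in\mathbb{N}_0^d$, and $v=t^1\cdots t^m$. For each $c\in\mathbb{R}^d$, the section $x=c$ of the hypersurface $\{(t,x)\in\mathbb{R}^{m+d}:\ H_n(v,x)=0\}$, i.e. the set $\{t\in\mathbb{R}^m_+:\ H_n(t^1\cdots t^m,c)=0\}$, is a union of Tzitzeica hypersurfaces in $\mathbb{R}^m_+$.
   Context: For $n=(n_1,\dots,n_d)\in\mathbb{N}_0^d$ and $\xi\in\mathbb{R}^d$, $\xi^n=(\xi^1)^{n_1}\cdots(\xi^d)^{n_d}$. The Hermite polynomials $H_n(v,x)$, $v\ge0$, $x\in\mathbb{R}^d$, are defined by the generating function $e^{\langle x,\xi\rangle-\frac12 v\|\xi\|^2}=\sum_{n\in\mathbb{N}_0^d}H_n(v,x)\xi^n$. A hypersurface $M\subset\mathbb{R}^m_+$, $m\ge3$, is a Tzitzeica hypersurface if there is a constant $a\in\mathbb{R}$ such that $K=a\,d^{m+1}$ at every point $t\in M$, where $K$ is the Gauss curvature of $M$ at $t$ and $d$ is the distance from the origin to the tangent hyperplane of $M$ at $t$; the simplest examples are the level sets $t^1\cdots t^m=k$. *)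

theory Defs
  imports "HOL-Analysis.Analysis"
begin

definition mpow :: "real^'d \<Rightarrow> ('d::finite \<Rightarrow> nat) \<Rightarrow> real" where
  "mpow \<xi> n = (\<Prod>i\<in>UNIV. (\<xi>$i) ^ (n i))"

definition hermite_H :: "('d::finite \<Rightarrow> nat) \<Rightarrow> real \<Rightarrow> real^'d \<Rightarrow> real" where
  "hermite_H n v x =
     (THE h. \<forall>\<xi>::real^'d. ((\<lambda>k. h k * mpow \<xi> k) has_sum
                 exp (x \<bullet> \<xi> - v / 2 * (norm \<xi>)\<^sup>2)) UNIV) n"

text \<open>Bordered Hessian [[Hess F, grad F],[grad F^T, 0]], indexed by 'm option (None = extra row/col).\<close>
definition bordered :: "real^'m^'m \<Rightarrow> real^'m \<Rightarrow> real^('m::finite option)^('m option)" where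
  "bordered Hs g = (\<chi> i j. case (i, j) of
      (Some a, Some b) \<Rightarrow> Hs$a$b
    | (Some a, None) \<Rightarrow> g$a
    | (None, Some b) \<Rightarrow> g$b
    | (None, None) \<Rightarrow> 0)"

text \<open>Gauss(-Kronecker) curvature of the level hypersurface F = 0 at a point where
  grad F = g and Hess F = Hs (ambient dimension m).\<close>
definition gauss_curv :: "real^'m^'m \<Rightarrow> real^('m::finite) \<Rightarrow> real" where
  "gauss_curv Hs g = - det (bordered Hs g) / (norm g) ^ (CARD('m) + 1)"

definition tangent_dist :: "real^'m \<Rightarrow> real^('m::finite) \<Rightarrow> real" where
  "tangent_dist t g = infdist 0 {s. (s - t) \<bullet> g = 0}"

definition pos_orthant :: "(real^('m::finite)) set" where
  "pos_orthant = {t. \<forall>i. 0 < t$i}"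

definition tzitzeica_hypersurface :: "(real^('m::finite)) set \<Rightarrow> bool" where
  "tzitzeica_hypersurface M \<longleftrightarrow> M \<noteq> {} \<and> M \<subseteq> pos_orthant \<and>
     (\<exists>U F g Hs a. open U \<and> M = {t\<in>U. F t = (0::real)} \<and>
        (\<forall>t\<in>U. (F has_derivative (\<lambda>h. g t \<bullet> h)) (at t) \<and>
                 (g has_derivative (\<lambda>h. Hs t *v h)) (at t)) \<and>
        continuous_on U Hs \<and>
        (\<forall>t\<in>M. g t \<noteq> 0) \<and>
        (\<forall>t\<in>M. gauss_curv (Hs t) (g t) = a * (tangent_dist t (g t)) ^ (CARD('m) + 1)))"

end

theory Submission imports Defs begin

text \<open>The equation \<open>H\<^sub>n(t\<^sup>1\<cdots>t\<^sup>m, c) = 0\<close> depends on \<open>t\<close> only through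
  \<open>v = t\<^sup>1\<cdots>t\<^sup>m\<close>, so its solution set in the positive orthant is the union, over the
  positive roots \<open>k\<close> of \<open>v \<mapsto> H\<^sub>n(v, c)\<close>, of the level sets \<open>t\<^sup>1\<cdots>t\<^sup>m = k\<close>.
  Each of them is the zero set of \<open>F(t) = \<Sum>\<^sub>i ln t\<^sup>i - ln k\<close>, with gradient \<open>(1/t\<^sup>i)\<^sub>i\<close>
  and diagonal Hessian \<open>diag(-1/(t\<^sup>i)\<^sup>2)\<close>. The bordered Hessian then has determinant
  \<open>m(-1)\<^sup>m/k\<^sup>2\<close> and \<open>t \<bullet> \<nabla>F = m\<close>, whence \<open>K = (-1)\<^sup>m\<^sup>+\<^sup>1/(k\<^sup>2 m\<^sup>m) \<cdot> d\<^sup>m\<^sup>+\<^sup>1\<close>.\<close>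

lemma prod_UNIV_option:
  fixes f :: "'a::finite option \<Rightarrow> 'b::comm_monoid_mult"
  shows "(\<Prod>i\<in>UNIV. f i) = f None * (\<Prod>a\<in>UNIV. f (Some a))"
  by (subst UNIV_option_conv) (simp add: prod.reindex)

lemma det_clear_border_row:
  fixes A :: "'a::field^'m::finite option^'m option"
  assumes A: "\<And>a b. A$Some a$Some b = (if a = b then D a else 0)" and D: "\<And>a. D a \<noteq> 0"
  obtains A' where "det A' = det A" and "\<And>a. A'$Some a = A$Some a" and "\<And>b. A'$None$Some b = 0"
    and "A'$None$None = A$None$None - (\<Sum>a\<in>UNIV. A$None$Some a * A$Some a$None / D a)"
proof
  define x where "x = - (\<Sum>a\<in>UNIV. (A$None$Some a / D a) *s row (Some a) A)"
  define A' where "A' = (\<chi> k. if k = None then row None A + x else row k A)"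
  have "x \<in> vec.span {row j A |j. j \<noteq> None}"
    unfolding x_def by (intro vec.span_neg vec.span_sum vec.span_scale vec.span_base) auto
  then show "det A' = det A"
    unfolding A'_def by (rule det_row_span)
  have x: "x $ j = - (\<Sum>a\<in>UNIV. A$None$Some a / D a * A$Some a$j)" for j
    by (simp add: x_def sum_component row_def)
  show "A'$Some a = A$Some a" for a
    by (simp add: A'_def row_def vec_eq_iff)
  show "A'$None$Some b = 0" for b
  proof -
    have "(\<Sum>a\<in>UNIV. A$None$Some a / D a * A$Some a$Some b) = (\<Sum>a\<in>UNIV. if a = b then A$None$Some b else 0)"
      by (intro sum.cong) (auto simp: A D)
    then show ?thesis
      by (simp add: A'_def row_def x)
  qed
  show "A'$None$None = A$None$None - (\<Sum>a\<in>UNIV. A$None$Some a * A$Some a$None / D a)"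
    by (simp add: A'_def row_def x sum_negf)
qed

lemma det_bordered_diagonal:
  fixes D :: "'m::finite \<Rightarrow> real" and g :: "real^'m"
  assumes D: "\<And>a. D a \<noteq> 0"
  shows "det (bordered (\<chi> a b. if a = b then D a else 0) g)
         = - (\<Sum>a\<in>UNIV. (g$a)^2 / D a) * (\<Prod>a\<in>UNIV. D a)"
proof -
  txt \<open>Clear the border row, then (after transposing) the border column; what remains is
    diagonal with corner entry the Schur complement \<open>s\<close>.\<close>
  define B where "B = bordered (\<chi> a b. if a = b then D a else 0) g"
  define s where "s = - (\<Sum>a\<in>UNIV. (g$a)^2 / D a)"
  have B: "B$Some a$Some b = (if a = b then D a else 0)" for a b
    by (simp add: B_def bordered_def)
  have B_border: "B$None$Some a = g$a" "B$Some a$None = g$a" "B$None$None = 0" for a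
    by (simp_all add: B_def bordered_def)
  obtain B' where det_B': "det B' = det B" and B'_Some: "\<And>a. B'$Some a = B$Some a"
    and B'_border: "\<And>b. B'$None$Some b = 0"
    and B'_corner: "B'$None$None = B$None$None - (\<Sum>a\<in>UNIV. B$None$Some a * B$Some a$None / D a)"
    using det_clear_border_row[OF B D] by blast
  have C: "transpose B'$Some a$Some b = (if a = b then D a else 0)" for a b
    by (simp add: transpose_def B'_Some B)
  obtain C' where det_C': "det C' = det (transpose B')" and C'_Some: "\<And>a. C'$Some a = transpose B'$Some a"
    and C'_border: "\<And>b. C'$None$Some b = 0"
    and C'_corner: "C'$None$None = transpose B'$None$None
          - (\<Sum>a\<in>UNIV. transpose B'$None$Some a * transpose B'$Some a$None / D a)"
    using det_clear_border_row[OF C D] by blast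
  have "B'$None$None = s"
    by (simp add: B'_corner B_border s_def power2_eq_square)
  then have C'_None: "C'$None$None = s"
    by (simp add: C'_corner transpose_def B'_border)
  have C'_diag: "C'$Some a$Some b = (if a = b then D a else 0)" for a b
    using C by (simp add: C'_Some)
  have C'_column: "C'$Some a$None = 0" for a
    by (simp add: C'_Some transpose_def B'_border)
  have "det C' = (\<Prod>i\<in>UNIV. C'$i$i)"
  proof (rule det_diagonal)
    fix i j :: "'m option" assume "i \<noteq> j"
    then show "C'$i$j = 0"
      by (cases i; cases j) (auto simp only: C'_border C'_column C'_diag split: if_splits)
  qed
  also have "\<dots> = s * (\<Prod>a\<in>UNIV. D a)"
    by (simp add: prod_UNIV_option C'_None C'_diag)
  finally show ?thesis
    using det_B' det_C' by (simp add: B_def s_def)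
qed

lemma tangent_dist_eq:
  fixes t g :: "real^'m::finite"
  assumes g: "g \<noteq> 0"
  shows "tangent_dist t g = \<bar>t \<bullet> g\<bar> / norm g"
proof -
  define A where "A = {s. (s - t) \<bullet> g = 0}"
  define s0 where "s0 = ((t \<bullet> g) / (g \<bullet> g)) *\<^sub>R g"
  have s0: "s0 \<in> A"
    using g by (simp add: A_def s0_def inner_diff_left)
  have "norm s0 = \<bar>t \<bullet> g\<bar> / norm g"
    using g by (simp add: s0_def power2_norm_eq_inner[symmetric] abs_div power2_eq_square)
  then have le: "infdist 0 A \<le> \<bar>t \<bullet> g\<bar> / norm g"
    using infdist_le[OF s0, of 0] by simp
  have "\<bar>t \<bullet> g\<bar> / norm g \<le> dist 0 s" if "s \<in> A" for s
  proof -
    from that have "s \<bullet> g = t \<bullet> g"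
      by (simp add: A_def inner_diff_left)
    then have "\<bar>t \<bullet> g\<bar> \<le> norm s * norm g"
      using Cauchy_Schwarz_ineq2[of s g] by simp
    then show ?thesis
      using g by (simp add: divide_le_eq)
  qed
  then have "\<bar>t \<bullet> g\<bar> / norm g \<le> (INF s\<in>A. dist 0 s)"
    using s0 by (auto intro!: cINF_greatest)
  then have "\<bar>t \<bullet> g\<bar> / norm g \<le> infdist 0 A"
    using s0 by (subst infdist_notempty) auto
  with le show ?thesis
    unfolding tangent_dist_def A_def[symmetric] by simp
qed

lemma open_pos_orthant: "open (pos_orthant :: (real^'m::finite) set)"
proof -
  have "open {t::real^'m. 0 < t$i}" for i
    by (intro open_Collect_less continuous_intros)
  then have "open (\<Inter>i. {t::real^'m. 0 < t$i})"
    by (simp add: open_INT)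
  then show ?thesis
    by (simp add: pos_orthant_def Collect_all_eq)
qed

lemma has_derivative_ln_nth:
  assumes "0 < (t::real^'m::finite)$i"
  shows "((\<lambda>t. ln (t$i)) has_derivative (\<lambda>h. h$i / t$i)) (at t)"
  using has_derivative_compose[OF bounded_linear_imp_has_derivative[OF bounded_linear_vec_nth]
      DERIV_ln[OF assms, unfolded has_field_derivative_def]]
  by (simp add: divide_inverse mult.commute)

lemma has_derivative_inverse_nth:
  assumes "0 < (t::real^'m::finite)$i"
  shows "((\<lambda>t. 1 / t$i) has_derivative (\<lambda>h. - (h$i / (t$i)^2))) (at t)"
proof -
  have "(inverse has_field_derivative - (inverse (t$i) ^ Suc (Suc 0))) (at (t$i))"
    using DERIV_inverse[of "t$i" UNIV] assms by simp
  from has_derivative_compose[OF bounded_linear_imp_has_derivative[OF bounded_linear_vec_nth]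
      this[unfolded has_field_derivative_def]]
  show ?thesis
    by (simp add: divide_inverse power2_eq_square mult.commute inverse_mult_distrib)
qed

lemma has_derivative_sum_ln:
  fixes t :: "real^'m::finite"
  assumes "t \<in> pos_orthant"
  shows "((\<lambda>t. (\<Sum>i\<in>UNIV. ln (t$i)) - c) has_derivative (\<lambda>h. (\<chi> i. 1 / t$i) \<bullet> h)) (at t)"
proof -
  have "((\<lambda>t. (\<Sum>i\<in>UNIV. ln (t$i)) - c) has_derivative (\<lambda>h. (\<Sum>i\<in>UNIV. h$i / t$i) - 0)) (at t)"
    using assms unfolding pos_orthant_def
    by (intro has_derivative_diff has_derivative_sum has_derivative_const has_derivative_ln_nth) auto
  then show ?thesis
    by (simp add: inner_vec_def)
qed

lemma has_derivative_reciprocals: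
  fixes t :: "real^'m::finite"
  assumes "t \<in> pos_orthant"
  shows "((\<lambda>t. \<chi> i. 1 / t$i) has_derivative
           (\<lambda>h. (\<chi> a b. if a = b then - 1 / (t$a)^2 else 0) *v h)) (at t)"
proof -
  have mv: "((\<chi> a b. if a = b then - 1 / (t$a)^2 else 0) *v h) $ i = - (h$i / (t$i)^2)" for h i
  proof -
    have "(\<Sum>b\<in>UNIV. (if i = b then - 1 / (t$i)^2 else 0) * h$b)
          = (\<Sum>b\<in>UNIV. if b = i then - (h$i / (t$i)^2) else 0)"
      by (intro sum.cong) auto
    then show ?thesis
      by (simp add: matrix_vector_mult_def)
  qed
  show ?thesis
  proof (subst has_derivative_componentwise_within, intro ballI)
    fix e :: "real^'m" assume "e \<in> Basis"
    then obtain j where e: "e = axis j 1"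
      by (auto simp: Basis_vec_def)
    have "0 < t$j"
      using assms by (simp add: pos_orthant_def)
    then show "((\<lambda>x. (\<chi> i. 1 / x$i) \<bullet> e) has_derivative
          (\<lambda>x. ((\<chi> a b. if a = b then - 1 / (t$a)^2 else 0) *v x) \<bullet> e)) (at t)"
      unfolding e inner_axis by (simp add: mv has_derivative_inverse_nth)
  qed
qed

lemma gauss_curv_product_level:
  fixes t :: "real^'m::finite"
  assumes t: "t \<in> pos_orthant" and k: "(\<Prod>i\<in>UNIV. t$i) = k"
  defines "g \<equiv> \<chi> i. 1 / t$i" and "m \<equiv> CARD('m)"
  shows "gauss_curv (\<chi> a b. if a = b then - 1 / (t$a)^2 else 0) g
         = (-1)^(m + 1) / (k^2 * real m ^ m) * tangent_dist t g ^ (m + 1)"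
proof -
  have pos: "t$i \<noteq> 0" for i
    using t unfolding pos_orthant_def by (simp add: order_less_imp_not_eq2)
  have "det (bordered (\<chi> a b. if a = b then - 1 / (t$a)^2 else 0) g)
        = - (\<Sum>a\<in>UNIV. (g$a)^2 / (- 1 / (t$a)^2)) * (\<Prod>a\<in>UNIV. - 1 / (t$a)^2)"
    using pos by (intro det_bordered_diagonal) simp
  also have "(\<Sum>a\<in>UNIV. (g$a)^2 / (- 1 / (t$a)^2)) = (\<Sum>a\<in>(UNIV::'m set). -1)"
    using pos by (intro sum.cong) (auto simp: g_def power2_eq_square)
  also have "(\<Prod>a\<in>UNIV. - 1 / (t$a)^2) = (\<Prod>a\<in>(UNIV::'m set). (-1::real)) / (\<Prod>a\<in>UNIV. t$a)^2"
    by (simp only: prod_dividef prod_power_distrib)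
  finally have curv: "gauss_curv (\<chi> a b. if a = b then - 1 / (t$a)^2 else 0) g
      = - (real m * (-1)^m / k^2) / norm g ^ (m + 1)"
    by (simp add: gauss_curv_def m_def k)
  have dist: "tangent_dist t g = real m / norm g"
  proof -
    have "g \<noteq> 0"
      using pos by (simp add: g_def vec_eq_iff)
    moreover have "t \<bullet> g = real m"
    proof -
      have "t \<bullet> g = (\<Sum>i\<in>(UNIV::'m set). 1)"
        unfolding inner_vec_def g_def using pos by (intro sum.cong) auto
      then show ?thesis
        by (simp add: m_def)
    qed
    ultimately show ?thesis
      by (simp add: tangent_dist_eq)
  qed
  have "norm g \<noteq> 0" "real m \<noteq> 0" "k \<noteq> 0"
    using pos by (auto simp: g_def m_def vec_eq_iff k[symmetric])
  then have "- (real m * (-1)^m / k^2) / norm g ^ (m + 1)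
      = (-1)^(m + 1) / (k^2 * real m ^ m) * (real m / norm g) ^ (m + 1)"
    by (simp add: power_divide divide_simps)
  then show ?thesis
    by (simp only: curv dist)
qed

lemma tzitzeica_product_level:
  assumes k: "0 < k"
  shows "tzitzeica_hypersurface {t::real^'m::finite. t \<in> pos_orthant \<and> (\<Prod>i\<in>UNIV. t$i) = k}"
    (is "tzitzeica_hypersurface ?M")
proof -
  define F where "F t = (\<Sum>i\<in>UNIV. ln (t$i)) - ln k" for t :: "real^'m"
  define g :: "real^'m \<Rightarrow> real^'m" where "g t = (\<chi> i. 1 / t$i)" for t
  define Hs :: "real^'m \<Rightarrow> real^'m^'m"
    where "Hs t = (\<chi> a b. if a = b then - 1 / (t$a)^2 else 0)" for t
  have pos: "t$i \<noteq> 0" if "t \<in> pos_orthant" for t :: "real^'m" and i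
    using that unfolding pos_orthant_def by (simp add: order_less_imp_not_eq2)
  have "(\<chi> i. if i = undefined then k else 1) \<in> ?M"
    using k by (auto simp: pos_orthant_def prod.If_cases)
  then have nonempty: "?M \<noteq> {}"
    by blast
  have level: "?M = {t\<in>pos_orthant. F t = 0}"
  proof -
    have "F t = 0 \<longleftrightarrow> (\<Prod>i\<in>UNIV. t$i) = k" if "t \<in> pos_orthant" for t
    proof -
      have "(\<Sum>i\<in>UNIV. ln (t$i)) = ln (\<Prod>i\<in>UNIV. t$i)"
        using pos[OF that] by (simp add: ln_prod)
      moreover have "0 < (\<Prod>i\<in>UNIV. t$i)"
        using that by (simp add: pos_orthant_def prod_pos)
      ultimately show ?thesis
        using k by (simp add: F_def)
    qed
    then show ?thesis
      by auto
  qed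
  have derivatives: "\<forall>t\<in>pos_orthant. (F has_derivative (\<lambda>h. g t \<bullet> h)) (at t) \<and>
                   (g has_derivative (\<lambda>h. Hs t *v h)) (at t)"
    unfolding F_def g_def Hs_def
    by (simp add: has_derivative_sum_ln has_derivative_reciprocals)
  have "continuous_on pos_orthant (\<lambda>t::real^'m. if a = b then - 1 / (t$a)^2 else 0)" for a b
    by (cases "a = b") (auto intro!: continuous_intros simp: pos)
  then have continuous: "continuous_on pos_orthant Hs"
    unfolding Hs_def by (intro continuous_on_vec_lambda)
  have gradient_nonzero: "\<forall>t\<in>?M. g t \<noteq> 0"
    by (simp add: g_def vec_eq_iff pos)
  have curvature: "\<forall>t\<in>?M. gauss_curv (Hs t) (g t)
      = (-1)^(CARD('m) + 1) / (k^2 * real CARD('m) ^ CARD('m)) * tangent_dist t (g t) ^ (CARD('m) + 1)"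
    unfolding Hs_def g_def using gauss_curv_product_level by blast
  show ?thesis
    unfolding tzitzeica_hypersurface_def
    using nonempty open_pos_orthant level derivatives continuous gradient_nonzero curvature
    by (intro conjI exI[of _ pos_orthant] exI[of _ F] exI[of _ g] exI[of _ Hs]
        exI[of _ "(-1)^(CARD('m) + 1) / (k^2 * real CARD('m) ^ CARD('m))"]) blast+
qed

theorem mainTheorem8:
  fixes n :: "'d::finite \<Rightarrow> nat" and c :: "real^'d"
  assumes "CARD('m::finite) \<ge> 3"
  shows "\<exists>\<M>::(real^'m) set set. (\<forall>M\<in>\<M>. tzitzeica_hypersurface M) \<and>
           \<Union>\<M> = {t \<in> pos_orthant. hermite_H n (\<Prod>i\<in>UNIV. t$i) c = 0}"
proof
  let ?level = "\<lambda>k. {t::real^'m. t \<in> pos_orthant \<and> (\<Prod>i\<in>UNIV. t$i) = k}"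
  let ?roots = "{k. 0 < k \<and> hermite_H n k c = 0}"
  have "0 < (\<Prod>i\<in>UNIV. t$i)" if "t \<in> pos_orthant" for t :: "real^'m"
    using that by (simp add: pos_orthant_def prod_pos)
  then have "\<Union>(?level ` ?roots) = {t \<in> pos_orthant. hermite_H n (\<Prod>i\<in>UNIV. t$i) c = 0}"
    by auto
  moreover have "\<forall>M \<in> ?level ` ?roots. tzitzeica_hypersurface M"
    by (auto intro: tzitzeica_product_level)
  ultimately show "(\<forall>M \<in> ?level ` ?roots. tzitzeica_hypersurface M) \<and>
      \<Union>(?level ` ?roots) = {t \<in> pos_orthant. hermite_H n (\<Prod>i\<in>UNIV. t$i) c = 0}"
    by blast
qed

end
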